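(* Let $K\subseteq L$ be differential fields and $r\in\mathbb{N}$. Then $K$ is $r$-differentially closed in $L$ if and only if there is no differential subfield $E$ of $L$ with $K\subsetneq E$ and $\operatorname{trdeg}(E|K)\le r$.
   Context: Differential fields have characteristic $0$. $K$ is $r$-differentially closed in $L$ if for every nonzero differential polynomial $P\in K\{Y\}$ of order $\le r$, every zero of $P$ in $L$ lies in $K$. $\operatorname{trdeg}$ denotes transcendence degree of field extensions. *)

theory Defs
  imports Main "HOL-Library.Extended_Nat"
begin

text \<open>The ambient differential field L is the type 'a (characteristic 0),
  with derivation D. Subfields are subsets of 'a.\<close>

definition derivation :: "('a::field_char_0 \<Rightarrow> 'a) \<Rightarrow> bool" where
  "derivation D \<longleftrightarrow> (\<forall>x y. D (x + y) = D x + D y) \<and> (\<forall>x y. D (x * y) = D x * y + x * D y)"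

definition subfield :: "'a::field set \<Rightarrow> bool" where
  "subfield K \<longleftrightarrow> 0 \<in> K \<and> 1 \<in> K \<and> (\<forall>x\<in>K. \<forall>y\<in>K. x + y \<in> K \<and> x - y \<in> K \<and> x * y \<in> K)
     \<and> (\<forall>x\<in>K. x \<noteq> 0 \<longrightarrow> inverse x \<in> K)"

definition diff_subfield :: "('a::field_char_0 \<Rightarrow> 'a) \<Rightarrow> 'a set \<Rightarrow> bool" where
  "diff_subfield D K \<longleftrightarrow> subfield K \<and> (\<forall>x\<in>K. D x \<in> K)"

text \<open>Multivariate polynomials in variables X_0,...,X_{n-1}, given by their coefficient
  function on exponent vectors (nat \<Rightarrow> nat).\<close>

definition is_mpoly :: "'a::field set \<Rightarrow> nat \<Rightarrow> ((nat \<Rightarrow> nat) \<Rightarrow> 'a) \<Rightarrow> bool" where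
  "is_mpoly K n c \<longleftrightarrow> finite {\<alpha>. c \<alpha> \<noteq> 0} \<and>
     (\<forall>\<alpha>. c \<alpha> \<noteq> 0 \<longrightarrow> c \<alpha> \<in> K \<and> (\<forall>i\<ge>n. \<alpha> i = 0))"

definition mpoly_nonzero :: "((nat \<Rightarrow> nat) \<Rightarrow> 'a::field) \<Rightarrow> bool" where
  "mpoly_nonzero c \<longleftrightarrow> (\<exists>\<alpha>. c \<alpha> \<noteq> 0)"

definition mpeval :: "nat \<Rightarrow> ((nat \<Rightarrow> nat) \<Rightarrow> 'a::field) \<Rightarrow> (nat \<Rightarrow> 'a) \<Rightarrow> 'a" where
  "mpeval n c x = (\<Sum>\<alpha>\<in>{\<alpha>. c \<alpha> \<noteq> 0}. c \<alpha> * (\<Prod>i<n. x i ^ \<alpha> i))"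

text \<open>K is r-differentially closed in L: every zero in L of a nonzero differential polynomial
  P(Y, Y', ..., Y^(r)) with coefficients in K lies in K.\<close>

definition r_diff_closed :: "('a::field_char_0 \<Rightarrow> 'a) \<Rightarrow> nat \<Rightarrow> 'a set \<Rightarrow> bool" where
  "r_diff_closed D r K \<longleftrightarrow>
     (\<forall>c y. is_mpoly K (Suc r) c \<and> mpoly_nonzero c \<and> mpeval (Suc r) c (\<lambda>i. (D ^^ i) y) = 0
        \<longrightarrow> y \<in> K)"

definition alg_indep :: "'a::field set \<Rightarrow> 'a list \<Rightarrow> bool" where
  "alg_indep K xs \<longleftrightarrow> distinct xs \<and>
     (\<forall>c. is_mpoly K (length xs) c \<and> mpoly_nonzero c \<longrightarrow> mpeval (length xs) c (\<lambda>i. xs ! i) \<noteq> 0)"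

definition trdeg :: "'a::field set \<Rightarrow> 'a set \<Rightarrow> enat" where
  "trdeg K E = Sup {enat (length xs) | xs. set xs \<subseteq> E \<and> alg_indep K xs}"

end

theory Submission
  imports Defs "HOL-Library.FuncSet"
begin

text \<open>If \<open>K \<subset> E\<close> with \<open>trdeg K E \<le> r\<close>, then for any \<open>y \<in> E - K\<close> the elements
  \<open>y, y', \<dots>, y\<^sup>(\<^sup>r\<^sup>)\<close> of \<open>E\<close> are algebraically dependent over \<open>K\<close>, and a dependence
  is a nonzero differential polynomial of order \<open>\<le> r\<close> vanishing at \<open>y\<close>.

  Conversely, let \<open>y \<notin> K\<close> be a zero of such a polynomial and choose one, \<open>P\<close>, of minimal order
  \<open>m\<close> and then minimal degree \<open>g\<close> in \<open>Y\<^sup>(\<^sup>m\<^sup>)\<close>. Differentiating \<open>P(y) = 0\<close> and using that the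
  separant \<open>\<partial>P/\<partial>Y\<^sup>(\<^sup>m\<^sup>)\<close> does not vanish at \<open>y\<close> shows \<open>y\<^sup>(\<^sup>m\<^sup>+\<^sup>1\<^sup>) \<in> E = K(y, \<dots>, y\<^sup>(\<^sup>m\<^sup>))\<close>, so \<open>E\<close>
  is a differential field. To bound \<open>trdeg K E\<close> by \<open>m\<close> without field theory, we count: after
  multiplication by a power of the leading coefficient \<open>A\<close> of \<open>P\<close> (nonzero at \<open>y\<close> by minimality),
  every polynomial in \<open>y, \<dots>, y\<^sup>(\<^sup>m\<^sup>)\<close> of degree \<open>\<le> N\<close> lies in the \<open>K\<close>-span of \<open>O(N\<^sup>m)\<close> monomials
  whose \<open>y\<^sup>(\<^sup>m\<^sup>)\<close>-degree is \<open>< g\<close>. Given \<open>m + 1\<close> elements of \<open>E\<close>, their \<open>(d+1)\<^sup>m\<^sup>+\<^sup>1\<close> monomials of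
  degree \<open>\<le> d\<close> in each variable therefore satisfy a nontrivial \<open>K\<close>-linear relation once \<open>d\<close> is
  large.\<close>

lemma subfield_zero: "subfield K \<Longrightarrow> 0 \<in> K"
  by (simp add: subfield_def)

lemma subfield_one: "subfield K \<Longrightarrow> 1 \<in> K"
  by (simp add: subfield_def)

lemma subfield_add: "subfield K \<Longrightarrow> x \<in> K \<Longrightarrow> y \<in> K \<Longrightarrow> x + y \<in> K"
  by (simp add: subfield_def)

lemma subfield_diff: "subfield K \<Longrightarrow> x \<in> K \<Longrightarrow> y \<in> K \<Longrightarrow> x - y \<in> K"
  by (simp add: subfield_def)

lemma subfield_mult: "subfield K \<Longrightarrow> x \<in> K \<Longrightarrow> y \<in> K \<Longrightarrow> x * y \<in> K"
  by (simp add: subfield_def)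

lemma subfield_uminus: "subfield K \<Longrightarrow> x \<in> K \<Longrightarrow> - x \<in> K"
  using subfield_diff[of K 0 x] subfield_zero[of K] by simp

lemma subfield_inverse: "subfield K \<Longrightarrow> x \<in> K \<Longrightarrow> inverse x \<in> K"
  by (cases "x = 0") (auto simp: subfield_def)

lemma subfield_divide: "subfield K \<Longrightarrow> x \<in> K \<Longrightarrow> y \<in> K \<Longrightarrow> x / y \<in> K"
  by (simp add: divide_inverse subfield_mult subfield_inverse)

lemma subfield_sum: "subfield K \<Longrightarrow> (\<And>i. i \<in> A \<Longrightarrow> f i \<in> K) \<Longrightarrow> sum f A \<in> K"
  by (induction A rule: infinite_finite_induct) (auto simp: subfield_zero subfield_add)

lemma subfield_of_nat: "subfield K \<Longrightarrow> of_nat n \<in> K"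
  by (induction n) (auto simp: subfield_zero subfield_one subfield_add)

lemma derivation_add: "derivation D \<Longrightarrow> D (x + y) = D x + D y"
  by (simp add: derivation_def)

lemma derivation_mult: "derivation D \<Longrightarrow> D (x * y) = D x * y + x * D y"
  by (simp add: derivation_def)

lemma derivation_zero: "derivation D \<Longrightarrow> D 0 = 0"
  using derivation_add[of D 0 0] by simp

lemma derivation_one: "derivation D \<Longrightarrow> D 1 = 0"
  using derivation_mult[of D 1 1] by simp

lemma derivation_uminus: "derivation D \<Longrightarrow> D (- x) = - D x"
  using derivation_add[of D x "- x"] derivation_zero[of D]
  by (metis add.commute add.right_inverse eq_neg_iff_add_eq_0)

lemma derivation_sum: "derivation D \<Longrightarrow> D (sum f A) = (\<Sum>a\<in>A. D (f a))"
  by (induction A rule: infinite_finite_induct) (auto simp: derivation_zero derivation_add)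

lemma derivation_power: "derivation D \<Longrightarrow> D (x ^ n) = of_nat n * x ^ (n - 1) * D x"
proof (induction n)
  case 0
  then show ?case by (simp add: derivation_one)
next
  case (Suc n)
  have "D (x ^ Suc n) = D x * x ^ n + x * D (x ^ n)"
    using derivation_mult[OF Suc.prems] by simp
  also have "\<dots> = of_nat (Suc n) * x ^ n * D x"
    using Suc by (cases n) (auto simp: algebra_simps)
  finally show ?case by simp
qed

lemma derivation_divide:
  assumes "derivation D" "q \<noteq> 0"
  shows "D (p / q) = (D p * q - p * D q) / (q * q)"
proof -
  have "D p = D (p / q) * q + (p / q) * D q"
    using derivation_mult[OF assms(1), of "p / q" q] assms(2) by simp
  then show ?thesis using assms(2) by (simp add: field_simps)
qed

section \<open>Linear spans over a subfield\<close>

inductive_set span_over :: "'a::field set \<Rightarrow> 'a set \<Rightarrow> 'a set" for K S where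
  span_over_zero: "0 \<in> span_over K S"
| span_over_base: "s \<in> S \<Longrightarrow> s \<in> span_over K S"
| span_over_add: "x \<in> span_over K S \<Longrightarrow> y \<in> span_over K S \<Longrightarrow> x + y \<in> span_over K S"
| span_over_smult: "k \<in> K \<Longrightarrow> x \<in> span_over K S \<Longrightarrow> k * x \<in> span_over K S"

lemma span_over_mult_left:
  assumes "\<And>h. h \<in> H \<Longrightarrow> t * h \<in> span_over K C" and "x \<in> span_over K H"
  shows "t * x \<in> span_over K C"
  using assms(2)
proof induction
  case span_over_zero
  then show ?case by (simp add: span_over.span_over_zero)
next
  case (span_over_base s)
  then show ?case using assms(1) by blast
next
  case (span_over_add x y)
  then show ?case by (simp add: distrib_left span_over.span_over_add)
next
  case (span_over_smult k x)
  have "t * (k * x) = k * (t * x)" by (simp add: ac_simps)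
  then show ?case using span_over_smult by (metis span_over.span_over_smult)
qed

lemma span_over_mono: "H \<subseteq> C \<Longrightarrow> x \<in> span_over K H \<Longrightarrow> x \<in> span_over K C"
  using span_over_mult_left[of H 1 K C x] by (auto intro: span_over_base)

lemma span_over_mult:
  assumes "\<And>a b. a \<in> A \<Longrightarrow> b \<in> B \<Longrightarrow> a * b \<in> C"
    and "x \<in> span_over K A" and "y \<in> span_over K B"
  shows "x * y \<in> span_over K C"
  using assms(2)
proof induction
  case span_over_zero
  then show ?case by (simp add: span_over.span_over_zero)
next
  case (span_over_base s)
  show ?case
    by (rule span_over_mult_left[OF _ assms(3)])
       (use span_over_base in \<open>auto intro: span_over.span_over_base assms(1)\<close>)
next
  case (span_over_add x1 x2)
  then show ?case by (simp add: distrib_right span_over.span_over_add)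
next
  case (span_over_smult k x)
  have "k * x * y = k * (x * y)" by (simp add: ac_simps)
  then show ?case using span_over_smult by (metis span_over.span_over_smult)
qed

lemma span_over_uminus: "subfield K \<Longrightarrow> x \<in> span_over K S \<Longrightarrow> - x \<in> span_over K S"
  using span_over_smult[of "- 1" K x S] subfield_uminus[of K 1] subfield_one[of K] by simp

lemma span_over_diff:
  "subfield K \<Longrightarrow> x \<in> span_over K S \<Longrightarrow> y \<in> span_over K S \<Longrightarrow> x - y \<in> span_over K S"
  using span_over_add[OF _ span_over_uminus] by (metis diff_conv_add_uminus)

lemma span_over_sum: "(\<And>i. i \<in> A \<Longrightarrow> f i \<in> span_over K S) \<Longrightarrow> sum f A \<in> span_over K S"
  by (induction A rule: infinite_finite_induct) (auto intro: span_over_zero span_over_add)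

lemma span_over_empty: "x \<in> span_over K {} \<Longrightarrow> x = 0"
  by (induction rule: span_over.induct) auto

lemma span_over_insert:
  assumes "subfield K" and "x \<in> span_over K (insert b B)"
  shows "\<exists>l\<in>K. x - l * b \<in> span_over K B"
  using assms(2)
proof induction
  case span_over_zero
  then show ?case using subfield_zero[OF assms(1)] by (auto intro!: bexI[of _ 0] span_over.span_over_zero)
next
  case (span_over_base s)
  then show ?case
  proof
    assume "s = b"
    then show ?thesis
      using subfield_one[OF assms(1)] by (auto intro!: bexI[of _ 1] span_over.span_over_zero)
  next
    assume "s \<in> B"
    then show ?thesis
      using subfield_zero[OF assms(1)] by (auto intro!: bexI[of _ 0] span_over.span_over_base)
  qed
next
  case (span_over_add x y)
  then obtain l1 l2 where "l1 \<in> K" "x - l1 * b \<in> span_over K B" "l2 \<in> K" "y - l2 * b \<in> span_over K B"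
    by blast
  then show ?case
    by (intro bexI[of _ "l1 + l2"])
       (auto simp: subfield_add[OF assms(1)] algebra_simps dest: span_over.span_over_add)
next
  case (span_over_smult k x)
  then obtain l where "l \<in> K" "x - l * b \<in> span_over K B" by blast
  with span_over_smult(1) have "k * (x - l * b) \<in> span_over K B"
    by (simp add: span_over.span_over_smult)
  then show ?case using \<open>l \<in> K\<close> span_over_smult(1)
    by (intro bexI[of _ "k * l"]) (auto simp: subfield_mult[OF assms(1)] algebra_simps)
qed

lemma linear_relation_of_differences:
  assumes K: "subfield K" and "finite I" and "i0 \<in> I" and \<mu>: "\<forall>i\<in>I - {i0}. \<mu> i \<in> K"
    and c': "\<forall>i\<in>I - {i0}. c' i \<in> K" "\<exists>i\<in>I - {i0}. c' i \<noteq> 0"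
      "(\<Sum>i\<in>I - {i0}. c' i * (w i - \<mu> i * w i0)) = 0"
  shows "\<exists>c. (\<forall>i\<in>I. c i \<in> K) \<and> (\<exists>i\<in>I. c i \<noteq> 0) \<and> (\<Sum>i\<in>I. c i * w i) = 0"
proof -
  define c where "c i = (if i = i0 then - (\<Sum>j\<in>I - {i0}. c' j * \<mu> j) else c' i)" for i
  have "\<forall>i\<in>I. c i \<in> K"
    using c'(1) \<mu> by (auto simp: c_def intro!: subfield_uminus[OF K] subfield_sum[OF K] subfield_mult[OF K])
  moreover have "\<exists>i\<in>I. c i \<noteq> 0" using c'(2) by (auto simp: c_def)
  moreover have "(\<Sum>i\<in>I. c i * w i) = c i0 * w i0 + (\<Sum>i\<in>I - {i0}. c' i * w i)"
    using assms(2,3) by (simp add: sum.remove c_def)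
  moreover have "(\<Sum>i\<in>I - {i0}. c' i * (w i - \<mu> i * w i0))
      = (\<Sum>i\<in>I - {i0}. c' i * w i) - (\<Sum>j\<in>I - {i0}. c' j * \<mu> j) * w i0"
    by (simp add: right_diff_distrib sum_subtractf sum_distrib_left sum_distrib_right ac_simps)
  ultimately show ?thesis using c'(3) by (intro exI[of _ c]) (simp add: c_def)
qed

text \<open>A Steinitz-type exchange: eliminate the last generator from all vectors but one.\<close>

lemma span_over_linear_dependent:
  assumes K: "subfield K" and "finite B" and "finite I" and "card B < card I"
    and "\<And>i. i \<in> I \<Longrightarrow> w i \<in> span_over K B"
  shows "\<exists>c. (\<forall>i\<in>I. c i \<in> K) \<and> (\<exists>i\<in>I. c i \<noteq> 0) \<and> (\<Sum>i\<in>I. c i * w i) = 0"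
  using assms(2-5)
proof (induction B arbitrary: I w rule: finite_induct)
  case empty
  then obtain i0 where "i0 \<in> I" by fastforce
  moreover have "\<And>i. i \<in> I \<Longrightarrow> w i = 0" using empty by (auto dest: span_over_empty)
  ultimately show ?case using subfield_one[OF K] by (intro exI[of _ "\<lambda>_. 1"]) auto
next
  case (insert b B I w)
  have "\<forall>i\<in>I. \<exists>l\<in>K. w i - l * b \<in> span_over K B"
    using insert.prems(3) span_over_insert[OF K] by blast
  then obtain lam where lam: "\<And>i. i \<in> I \<Longrightarrow> lam i \<in> K"
    "\<And>i. i \<in> I \<Longrightarrow> w i - lam i * b \<in> span_over K B"
    by metis
  have card_insert: "card (insert b B) = Suc (card B)" using insert by simp
  show ?case
  proof (cases "\<forall>i\<in>I. lam i = 0")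
    case True
    then have "\<And>i. i \<in> I \<Longrightarrow> w i \<in> span_over K B" using lam by auto
    then show ?thesis using insert.IH[of I w] insert.prems card_insert by auto
  next
    case False
    then obtain i0 where i0: "i0 \<in> I" "lam i0 \<noteq> 0" by auto
    define w' where "w' i = w i - (lam i / lam i0) * w i0" for i
    have w': "w' i \<in> span_over K B" if "i \<in> I - {i0}" for i
    proof -
      have "w' i = (w i - lam i * b) - (lam i / lam i0) * (w i0 - lam i0 * b)"
        using i0 by (simp add: w'_def algebra_simps)
      moreover have "(lam i / lam i0) * (w i0 - lam i0 * b) \<in> span_over K B"
        using lam i0 that by (intro span_over_smult subfield_divide[OF K]) auto
      ultimately show ?thesis using lam that by (auto intro: span_over_diff[OF K])
    qed
    have "finite (I - {i0})" "card B < card (I - {i0})" using insert.prems card_insert i0 by auto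
    then obtain c' where "\<forall>i\<in>I - {i0}. c' i \<in> K" "\<exists>i\<in>I - {i0}. c' i \<noteq> 0"
        "(\<Sum>i\<in>I - {i0}. c' i * w' i) = 0"
      using insert.IH[of "I - {i0}" w'] w' by blast
    moreover have "\<forall>i\<in>I - {i0}. lam i / lam i0 \<in> K"
      using lam i0 by (auto intro: subfield_divide[OF K])
    ultimately show ?thesis
      using linear_relation_of_differences[OF K insert.prems(1) i0(1)] by (simp add: w'_def)
  qed
qed

section \<open>Polynomials and transcendence degree\<close>

definition exp_box :: "nat \<Rightarrow> nat \<Rightarrow> (nat \<Rightarrow> nat) set" where
  "exp_box n M = {\<beta>. (\<forall>i<n. \<beta> i \<le> M) \<and> (\<forall>i\<ge>n. \<beta> i = 0)}"

lemma card_exp_box: "card (exp_box n M) = Suc M ^ n"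
  and finite_exp_box: "finite (exp_box n M)"
proof -
  have b: "bij_betw (\<lambda>\<beta>. restrict \<beta> {..<n}) (exp_box n M) (PiE {..<n} (\<lambda>_. {..M}))"
    by (rule bij_betw_byWitness[where f' = "\<lambda>f i. if i < n then f i else 0"])
       (auto simp: exp_box_def fun_eq_iff PiE_def extensional_def Pi_def)
  show "card (exp_box n M) = Suc M ^ n" using bij_betw_same_card[OF b] by (simp add: card_PiE)
  show "finite (exp_box n M)" using bij_betw_finite[OF b] by (simp add: finite_PiE)
qed

lemma exp_box_add: "f \<in> exp_box n a \<Longrightarrow> f' \<in> exp_box n b \<Longrightarrow> (\<lambda>i. f i + f' i) \<in> exp_box n (a + b)"
  by (auto simp: exp_box_def intro: add_mono)

lemma exp_box_mono: "a \<le> b \<Longrightarrow> f \<in> exp_box n a \<Longrightarrow> f \<in> exp_box n b"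
  by (auto simp: exp_box_def)

lemma zero_in_exp_box: "(\<lambda>_. 0) \<in> exp_box n M"
  by (simp add: exp_box_def)

lemma mpeval_cong: "(\<And>i. i < n \<Longrightarrow> x i = x' i) \<Longrightarrow> mpeval n c x = mpeval n c x'"
  unfolding mpeval_def by (intro sum.cong refl arg_cong2[where f = "(*)"] prod.cong) auto

lemma is_mpoly_by_embedding:
  assumes "finite {\<alpha>. P \<alpha> \<noteq> 0}"
    and emb: "\<And>\<beta>. c \<beta> \<noteq> 0 \<Longrightarrow> P (h \<beta>) \<noteq> 0 \<and> h' (h \<beta>) = \<beta> \<and> c \<beta> \<in> K \<and> (\<forall>i\<ge>n. \<beta> i = 0)"
  shows "is_mpoly K n c"
proof -
  have "{\<beta>. c \<beta> \<noteq> 0} \<subseteq> h' ` {\<alpha>. P \<alpha> \<noteq> 0}"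
  proof
    fix \<beta> assume "\<beta> \<in> {\<beta>. c \<beta> \<noteq> 0}"
    with emb have "P (h \<beta>) \<noteq> 0" "\<beta> = h' (h \<beta>)" by auto
    then show "\<beta> \<in> h' ` {\<alpha>. P \<alpha> \<noteq> 0}" by blast
  qed
  then have "finite {\<beta>. c \<beta> \<noteq> 0}"
    using assms(1) finite_subset by blast
  then show ?thesis
    unfolding is_mpoly_def using emb by blast
qed

lemma mpoly_drop_last_var:
  assumes "is_mpoly K (Suc n) c" and last: "\<forall>\<alpha>. c \<alpha> \<noteq> 0 \<longrightarrow> \<alpha> n = 0"
  shows "is_mpoly K n c" and "mpeval (Suc n) c x = mpeval n c x"
proof -
  have "\<alpha> i = 0" if "c \<alpha> \<noteq> 0" "n \<le> i" for \<alpha> i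
    using assms(1) last that by (cases "i = n") (auto simp: is_mpoly_def)
  then show "is_mpoly K n c" using assms(1) by (simp add: is_mpoly_def)
  have "(\<Prod>i<Suc n. x i ^ \<alpha> i) = (\<Prod>i<n. x i ^ \<alpha> i)" if "c \<alpha> \<noteq> 0" for \<alpha>
  proof -
    have "\<alpha> n = 0" using last that by blast
    then show ?thesis by simp
  qed
  then show "mpeval (Suc n) c x = mpeval n c x"
    unfolding mpeval_def by (intro sum.cong) auto
qed

lemma mpeval_constant_nonzero:
  assumes "is_mpoly K 0 c" and "mpoly_nonzero c"
  shows "mpeval 0 c x \<noteq> 0"
proof -
  have "\<alpha> = (\<lambda>_. 0)" if "c \<alpha> \<noteq> 0" for \<alpha>
    using assms(1) that by (auto simp: is_mpoly_def)
  then have "{\<alpha>. c \<alpha> \<noteq> 0} = {\<lambda>_. 0}"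
    using assms(2) unfolding mpoly_nonzero_def by blast
  moreover from this have "c (\<lambda>_. 0) \<noteq> 0" by blast
  ultimately show ?thesis by (simp add: mpeval_def)
qed

lemma prod_clear_denominators:
  fixes p q x :: "nat \<Rightarrow> 'a::field"
  assumes frac: "\<And>j. j < n \<Longrightarrow> q j \<noteq> 0 \<and> x j = p j / q j" and \<alpha>: "\<alpha> \<in> exp_box n d"
  shows "(\<Prod>j<n. q j ^ (d - \<alpha> j) * p j ^ \<alpha> j) = (\<Prod>j<n. q j ^ d) * (\<Prod>j<n. x j ^ \<alpha> j)"
proof -
  have "(\<Prod>j<n. q j ^ (d - \<alpha> j) * p j ^ \<alpha> j) = (\<Prod>j<n. q j ^ d * x j ^ \<alpha> j)"
  proof (rule prod.cong)
    fix j assume "j \<in> {..<n}"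
    then have "q j ^ d = q j ^ (d - \<alpha> j) * q j ^ \<alpha> j"
      using \<alpha> by (simp add: exp_box_def power_add[symmetric])
    then show "q j ^ (d - \<alpha> j) * p j ^ \<alpha> j = q j ^ d * x j ^ \<alpha> j"
      using frac \<open>j \<in> {..<n}\<close> by (simp add: power_divide)
  qed simp
  then show ?thesis by (simp add: prod.distrib)
qed

text \<open>The counting inequality behind the dependence of \<open>m + 1\<close> elements: the \<open>(d+1)\<^sup>m\<^sup>+\<^sup>1\<close>
  monomials outnumber the \<open>g (M+1)\<^sup>m\<close> reduced monomials they are mapped into.\<close>

lemma box_count_exceeds:
  fixes g C d N0 m e N M :: nat
  assumes "C = (Suc m * N0 + 1) * (e + 1)" "d = g * C ^ m" "N = Suc m * (d * N0)" "M = N + Suc N * e"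
  shows "g * Suc M ^ m < Suc d ^ Suc m"
proof -
  have "Suc N \<le> Suc d * (Suc m * N0 + 1)" using assms(3) by (simp add: algebra_simps)
  then have "Suc N * Suc e \<le> Suc d * (Suc m * N0 + 1) * Suc e" by (rule mult_le_mono1)
  then have "Suc M \<le> Suc d * C" using assms(1,4) by (simp only: mult.assoc Suc_eq_plus1) simp
  then have "g * Suc M ^ m \<le> g * (Suc d * C) ^ m" by (simp add: power_mono)
  also have "\<dots> = d * Suc d ^ m" using assms(2) by (simp only: power_mult_distrib ac_simps)
  also have "\<dots> < Suc d * Suc d ^ m" by simp
  finally show ?thesis by simp
qed

lemma not_distinct_vanishing_mpoly:
  assumes K: "subfield K" and "\<not> distinct xs"
  shows "\<exists>c. is_mpoly K (length xs) c \<and> mpoly_nonzero c \<and> mpeval (length xs) c ((!) xs) = 0"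
proof -
  obtain i j where ij: "i < length xs" "j < length xs" "i \<noteq> j" "xs ! i = xs ! j"
    using assms(2) unfolding distinct_conv_nth by blast
  define ei where "ei = (\<lambda>k::nat. if k = i then 1 else (0::nat))"
  define ej where "ej = (\<lambda>k::nat. if k = j then 1 else (0::nat))"
  have neq: "ei \<noteq> ej" using ij by (auto simp: ei_def ej_def fun_eq_iff)
  define c where "c \<alpha> = (if \<alpha> = ei then 1 else if \<alpha> = ej then -1 else (0::'a))" for \<alpha>
  have supp: "{\<alpha>. c \<alpha> \<noteq> 0} = {ei, ej}" using neq by (auto simp: c_def)
  have "is_mpoly K (length xs) c"
    unfolding is_mpoly_def supp
  proof (intro conjI allI impI)
    fix \<alpha> assume "c \<alpha> \<noteq> 0"
    then show "c \<alpha> \<in> K"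
      using subfield_one[OF K] subfield_uminus[OF K subfield_one[OF K]] by (auto simp: c_def split: if_splits)
    fix k assume "length xs \<le> k"
    then show "\<alpha> k = 0" using \<open>c \<alpha> \<noteq> 0\<close> ij by (auto simp: c_def ei_def ej_def split: if_splits)
  qed simp
  moreover have "mpoly_nonzero c" by (auto simp: mpoly_nonzero_def c_def)
  moreover have "mpeval (length xs) c ((!) xs) = 0"
  proof -
    have "(\<Prod>k<length xs. (xs ! k) ^ ei k) = xs ! i" "(\<Prod>k<length xs. (xs ! k) ^ ej k) = xs ! j"
      using ij by (simp_all add: ei_def ej_def if_distrib[of "\<lambda>n. _ ^ n"] prod.delta cong: if_cong)
    moreover have "mpeval (length xs) c ((!) xs)
        = c ei * (\<Prod>k<length xs. (xs ! k) ^ ei k) + c ej * (\<Prod>k<length xs. (xs ! k) ^ ej k)"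
      unfolding mpeval_def supp using neq by simp
    ultimately show ?thesis using neq ij by (simp add: c_def)
  qed
  ultimately show ?thesis by blast
qed

lemma not_alg_indep_vanishing_mpoly:
  assumes "subfield K" and "\<not> alg_indep K xs"
  shows "\<exists>c. is_mpoly K (length xs) c \<and> mpoly_nonzero c \<and> mpeval (length xs) c ((!) xs) = 0"
  using assms not_distinct_vanishing_mpoly[OF assms(1)] by (auto simp: alg_indep_def)

lemma alg_indep_length_le_trdeg:
  "set xs \<subseteq> E \<Longrightarrow> alg_indep K xs \<Longrightarrow> enat (length xs) \<le> trdeg K E"
  unfolding trdeg_def by (rule Sup_upper) blast

lemma trdeg_le_if_dependent:
  assumes "\<And>xs. set xs \<subseteq> E \<Longrightarrow> n < length xs \<Longrightarrow> \<not> alg_indep K xs"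
  shows "trdeg K E \<le> enat n"
  unfolding trdeg_def
proof (rule Sup_least)
  fix x assume "x \<in> {enat (length xs) |xs. set xs \<subseteq> E \<and> alg_indep K xs}"
  then obtain xs where "x = enat (length xs)" "set xs \<subseteq> E" "alg_indep K xs" by blast
  then show "x \<le> enat n" using assms[of xs] by (meson enat_ord_simps(1) not_le)
qed

lemma not_alg_indep_if_box_relation:
  assumes "n \<le> length xs" and "\<forall>\<alpha>\<in>exp_box n d. c \<alpha> \<in> K" and "\<exists>\<alpha>\<in>exp_box n d. c \<alpha> \<noteq> 0"
    and "(\<Sum>\<alpha>\<in>exp_box n d. c \<alpha> * (\<Prod>j<n. (xs ! j) ^ \<alpha> j)) = 0"
  shows "\<not> alg_indep K xs"
proof -
  define I where "I = exp_box n d"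
  define c' where "c' \<beta> = (if \<beta> \<in> I then c \<beta> else 0)" for \<beta>
  have fin: "finite I" by (simp add: I_def finite_exp_box)
  have supp: "{\<beta>. c' \<beta> \<noteq> 0} \<subseteq> I" by (auto simp: c'_def split: if_splits)
  have poly: "is_mpoly K (length xs) c'"
    unfolding is_mpoly_def
  proof (intro conjI allI impI)
    show "finite {\<beta>. c' \<beta> \<noteq> 0}" using supp fin by (rule finite_subset)
    fix \<beta> assume b: "c' \<beta> \<noteq> 0"
    then show "c' \<beta> \<in> K" using assms(2) by (auto simp: c'_def I_def split: if_splits)
    fix i assume "length xs \<le> i"
    then show "\<beta> i = 0" using b assms(1) by (auto simp: c'_def I_def exp_box_def split: if_splits)
  qed
  have nonzero: "mpoly_nonzero c'"
    using assms(3) by (auto simp: mpoly_nonzero_def c'_def I_def)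
  have "mpeval (length xs) c' ((!) xs) = (\<Sum>\<beta>\<in>I. c' \<beta> * (\<Prod>i<length xs. (xs ! i) ^ \<beta> i))"
    unfolding mpeval_def by (rule sum.mono_neutral_left[OF fin supp]) auto
  also have "\<dots> = (\<Sum>\<alpha>\<in>I. c \<alpha> * (\<Prod>j<n. (xs ! j) ^ \<alpha> j))"
  proof (rule sum.cong)
    fix \<beta> assume "\<beta> \<in> I"
    then have "(\<Prod>i<length xs. (xs ! i) ^ \<beta> i) = (\<Prod>j<n. (xs ! j) ^ \<beta> j)"
      using assms(1) by (intro prod.mono_neutral_right) (auto simp: I_def exp_box_def)
    then show "c' \<beta> * (\<Prod>i<length xs. (xs ! i) ^ \<beta> i) = c \<beta> * (\<Prod>j<n. (xs ! j) ^ \<beta> j)"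
      using \<open>\<beta> \<in> I\<close> by (simp add: c'_def)
  qed simp
  also have "\<dots> = 0" using assms(4) by (simp add: I_def)
  finally show ?thesis using poly nonzero by (auto simp: alg_indep_def)
qed

section \<open>Closedness excludes small differential extensions\<close>

lemma r_diff_closed_no_small_extension:
  assumes "r_diff_closed D r K" and K: "subfield K" and E: "diff_subfield D E"
    and "K \<subset> E" and "trdeg K E \<le> enat r"
  shows False
proof -
  obtain y where y: "y \<in> E" "y \<notin> K" using assms(4) by blast
  define xs where "xs = map (\<lambda>i. (D^^i) y) [0..<Suc r]"
  have len: "length xs = Suc r" by (simp add: xs_def)
  have "(D^^i) y \<in> E" for i
    by (induction i) (use y E in \<open>auto simp: diff_subfield_def\<close>)
  then have "set xs \<subseteq> E" by (auto simp: xs_def)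
  have "\<not> alg_indep K xs"
  proof
    assume "alg_indep K xs"
    then have "enat (Suc r) \<le> trdeg K E"
      using alg_indep_length_le_trdeg[OF \<open>set xs \<subseteq> E\<close>] len by simp
    then show False using order_trans[OF _ assms(5)] by fastforce
  qed
  then obtain c where "is_mpoly K (length xs) c" "mpoly_nonzero c" "mpeval (length xs) c ((!) xs) = 0"
    using not_alg_indep_vanishing_mpoly[OF K] by blast
  then have c: "is_mpoly K (Suc r) c" "mpoly_nonzero c" "mpeval (Suc r) c ((!) xs) = 0"
    unfolding len .
  have "mpeval (Suc r) c (\<lambda>i. (D^^i) y) = mpeval (Suc r) c ((!) xs)"
    by (rule mpeval_cong) (simp add: xs_def del: upt_Suc)
  then have "y \<in> K" using assms(1) c by (auto simp: r_diff_closed_def)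
  then show False using y by simp
qed

section \<open>The differential field generated by a zero of a minimal annihilator\<close>

text \<open>\<open>u i\<close> plays the role of the \<open>i\<close>-th derivative of \<open>y = u 0\<close>, and \<open>P\<close> is an annihilator of
  \<open>y\<close> of minimal order \<open>m\<close> and, among those, of minimal degree \<open>g\<close> in \<open>Y\<^sup>(\<^sup>m\<^sup>)\<close>.\<close>

locale minimal_annihilator =
  fixes D :: "'a::field_char_0 \<Rightarrow> 'a" and K :: "'a set" and u :: "nat \<Rightarrow> 'a" and m g :: nat
    and P :: "(nat \<Rightarrow> nat) \<Rightarrow> 'a"
  assumes derivation: "derivation D" and diff_subfield: "diff_subfield D K"
    and D_u: "D (u i) = u (Suc i)"
    and P_mpoly: "is_mpoly K (Suc m) P" and P_vanishes: "mpeval (Suc m) P u = 0"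
    and P_degree: "\<And>\<alpha>. P \<alpha> \<noteq> 0 \<Longrightarrow> \<alpha> m \<le> g"
    and P_leading: "\<exists>\<alpha>. P \<alpha> \<noteq> 0 \<and> \<alpha> m = g"
    and degree_pos: "1 \<le> g"
    and minimal: "\<And>c. is_mpoly K (Suc m) c \<Longrightarrow> mpoly_nonzero c \<Longrightarrow> (\<forall>\<alpha>. c \<alpha> \<noteq> 0 \<longrightarrow> \<alpha> m < g)
       \<Longrightarrow> mpeval (Suc m) c u \<noteq> 0"
begin

lemma subfield_K: "subfield K"
  using diff_subfield by (simp add: diff_subfield_def)

lemma D_K: "k \<in> K \<Longrightarrow> D k \<in> K"
  using diff_subfield by (simp add: diff_subfield_def)

definition mon :: "nat \<Rightarrow> (nat \<Rightarrow> nat) \<Rightarrow> 'a" where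
  "mon n f = (\<Prod>i<n. u i ^ f i)"

lemma mon_cong: "(\<And>i. i < n \<Longrightarrow> f i = f' i) \<Longrightarrow> mon n f = mon n f'"
  unfolding mon_def by (rule prod.cong) auto

lemma mon_Suc: "mon (Suc n) f = mon n f * u n ^ f n"
  by (simp add: mon_def)

lemma mon_add: "mon n (\<lambda>i. f i + f' i) = mon n f * mon n f'"
  by (simp add: mon_def power_add prod.distrib)

lemma mon_zero: "mon n (\<lambda>_. 0) = 1"
  by (simp add: mon_def)

lemma mon_unit: "i < n \<Longrightarrow> mon n (\<lambda>j. if j = i then 1 else 0) = u i"
  unfolding mon_def by (simp add: if_distrib[of "\<lambda>k. u _ ^ k"] prod.delta cong: if_cong)

lemma mpeval_split_last: "mpeval (Suc m) c u = (\<Sum>\<alpha>\<in>{\<alpha>. c \<alpha> \<noteq> 0}. c \<alpha> * (mon m \<alpha> * u m ^ \<alpha> m))"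
  by (simp add: mpeval_def mon_def)

inductive_set R :: "'a set" where
  R_K: "k \<in> K \<Longrightarrow> k \<in> R"
| R_u: "i \<le> m \<Longrightarrow> u i \<in> R"
| R_add: "a \<in> R \<Longrightarrow> b \<in> R \<Longrightarrow> a + b \<in> R"
| R_mult: "a \<in> R \<Longrightarrow> b \<in> R \<Longrightarrow> a * b \<in> R"
| R_uminus: "a \<in> R \<Longrightarrow> - a \<in> R"

lemma R_zero: "0 \<in> R"
  by (rule R_K) (simp add: subfield_zero subfield_K)

lemma R_one: "1 \<in> R"
  by (rule R_K) (simp add: subfield_one subfield_K)

lemma R_diff: "a \<in> R \<Longrightarrow> b \<in> R \<Longrightarrow> a - b \<in> R"
  by (metis R_add R_uminus diff_conv_add_uminus)

lemma R_sum: "(\<And>i. i \<in> A \<Longrightarrow> f i \<in> R) \<Longrightarrow> sum f A \<in> R"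
  by (induction A rule: infinite_finite_induct) (auto intro: R_zero R_add)

lemma R_prod: "(\<And>i. i \<in> A \<Longrightarrow> f i \<in> R) \<Longrightarrow> prod f A \<in> R"
  by (induction A rule: infinite_finite_induct) (auto intro: R_one R_mult)

lemma R_power: "a \<in> R \<Longrightarrow> a ^ n \<in> R"
  by (induction n) (auto intro: R_one R_mult)

lemma R_of_nat: "of_nat n \<in> R"
  by (rule R_K) (simp add: subfield_of_nat subfield_K)

lemma R_mon: "n \<le> Suc m \<Longrightarrow> mon n f \<in> R"
  unfolding mon_def by (rule R_prod) (auto intro!: R_power R_u)

definition E :: "'a set" where
  "E = {p / q | p q. p \<in> R \<and> q \<in> R \<and> q \<noteq> 0}"

lemma E_I: "p \<in> R \<Longrightarrow> q \<in> R \<Longrightarrow> q \<noteq> 0 \<Longrightarrow> p / q \<in> E"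
  unfolding E_def by blast

lemma R_subset_E: "a \<in> R \<Longrightarrow> a \<in> E"
  using E_I[of a 1] R_one by simp

lemma subfield_E: "subfield E"
  unfolding subfield_def
proof (intro conjI ballI impI)
  show "0 \<in> E" "1 \<in> E" using R_subset_E R_zero R_one by auto
  fix x z assume "x \<in> E" "z \<in> E"
  then obtain p1 q1 p2 q2 where e: "x = p1 / q1" "z = p2 / q2" "p1 \<in> R" "q1 \<in> R" "p2 \<in> R" "q2 \<in> R"
    "q1 \<noteq> 0" "q2 \<noteq> 0" unfolding E_def by blast
  have "x + z = (p1 * q2 + p2 * q1) / (q1 * q2)" using e by (simp add: field_simps)
  then show "x + z \<in> E" using e by (auto intro!: E_I R_add R_mult)
  have "x - z = (p1 * q2 - p2 * q1) / (q1 * q2)" using e by (simp add: field_simps)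
  then show "x - z \<in> E" using e by (auto intro!: E_I R_diff R_mult)
  have "x * z = (p1 * p2) / (q1 * q2)" using e by (simp add: field_simps)
  then show "x * z \<in> E" using e by (auto intro!: E_I R_mult)
next
  fix x assume "x \<in> E" "x \<noteq> 0"
  then obtain p q where e: "x = p / q" "p \<in> R" "q \<in> R" "q \<noteq> 0" "p \<noteq> 0"
    unfolding E_def by auto
  then show "inverse x \<in> E" by (auto intro!: E_I)
qed

lemma D_mon_in_R: "n \<le> m \<Longrightarrow> D (mon n f) \<in> R"
proof (induction n)
  case 0
  then show ?case by (simp add: mon_def derivation_one[OF derivation] R_zero)
next
  case (Suc n)
  have "D (mon (Suc n) f)
      = D (mon n f) * u n ^ f n + mon n f * (of_nat (f n) * u n ^ (f n - 1) * u (Suc n))"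
    by (simp add: mon_Suc derivation_mult[OF derivation] derivation_power[OF derivation] D_u)
  then show ?case using Suc by (auto intro!: R_add R_mult R_power R_u R_mon R_of_nat)
qed

abbreviation supp_P :: "(nat \<Rightarrow> nat) set" where
  "supp_P \<equiv> {\<alpha>. P \<alpha> \<noteq> 0}"

lemma finite_supp_P: "finite supp_P"
  using P_mpoly by (simp add: is_mpoly_def)

lemma P_in_K: "P \<alpha> \<in> K"
  using P_mpoly subfield_zero[OF subfield_K] by (cases "P \<alpha> = 0") (auto simp: is_mpoly_def)

lemma P_vars: "P \<alpha> \<noteq> 0 \<Longrightarrow> Suc m \<le> i \<Longrightarrow> \<alpha> i = 0"
  using P_mpoly by (simp add: is_mpoly_def)

definition separant :: "(nat \<Rightarrow> nat) \<Rightarrow> 'a" where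
  "separant \<beta> = of_nat (Suc (\<beta> m)) * P (\<beta>(m := Suc (\<beta> m)))"

lemma separant_nonzero_iff: "separant \<beta> \<noteq> 0 \<longleftrightarrow> P (\<beta>(m := Suc (\<beta> m))) \<noteq> 0"
  by (simp add: separant_def del: of_nat_Suc)

lemma separant_mpoly: "is_mpoly K (Suc m) separant"
proof (rule is_mpoly_by_embedding[OF finite_supp_P, where h = "\<lambda>\<beta>. \<beta>(m := Suc (\<beta> m))"
      and h' = "\<lambda>\<alpha>. \<alpha>(m := \<alpha> m - 1)"])
  fix \<beta> assume "separant \<beta> \<noteq> 0"
  moreover have "separant \<beta> \<in> K"
    unfolding separant_def by (intro subfield_mult[OF subfield_K] subfield_of_nat[OF subfield_K] P_in_K)
  ultimately show "P (\<beta>(m := Suc (\<beta> m))) \<noteq> 0 \<and> (\<beta>(m := Suc (\<beta> m)))(m := (\<beta>(m := Suc (\<beta> m))) m - 1) = \<beta>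
      \<and> separant \<beta> \<in> K \<and> (\<forall>i\<ge>Suc m. \<beta> i = 0)"
    using P_vars[of "\<beta>(m := Suc (\<beta> m))"] by (auto simp: separant_nonzero_iff)
qed

lemma separant_at_u_nonzero: "mpeval (Suc m) separant u \<noteq> 0"
proof (rule minimal[OF separant_mpoly])
  obtain \<alpha> where \<alpha>: "P \<alpha> \<noteq> 0" "\<alpha> m = g" using P_leading by blast
  have "(\<alpha>(m := g - 1))(m := Suc ((\<alpha>(m := g - 1)) m)) = \<alpha>"
    using \<alpha> degree_pos by (auto simp: fun_eq_iff)
  then have "separant (\<alpha>(m := g - 1)) \<noteq> 0" using \<alpha> by (simp add: separant_nonzero_iff)
  then show "mpoly_nonzero separant" by (auto simp: mpoly_nonzero_def)
  show "\<forall>\<beta>. separant \<beta> \<noteq> 0 \<longrightarrow> \<beta> m < g"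
  proof (intro allI impI)
    fix \<beta> assume "separant \<beta> \<noteq> 0"
    then have "Suc (\<beta> m) \<le> g"
      using P_degree[of "\<beta>(m := Suc (\<beta> m))"] by (simp add: separant_nonzero_iff)
    then show "\<beta> m < g" by simp
  qed
qed

lemma separant_eval:
  "(\<Sum>\<alpha>\<in>supp_P. P \<alpha> * of_nat (\<alpha> m) * mon m \<alpha> * u m ^ (\<alpha> m - 1)) = mpeval (Suc m) separant u"
proof -
  have "(\<Sum>\<alpha>\<in>supp_P. P \<alpha> * of_nat (\<alpha> m) * mon m \<alpha> * u m ^ (\<alpha> m - 1))
      = (\<Sum>\<alpha>\<in>{\<alpha>\<in>supp_P. \<alpha> m \<noteq> 0}. P \<alpha> * of_nat (\<alpha> m) * mon m \<alpha> * u m ^ (\<alpha> m - 1))"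
    by (rule sum.mono_neutral_right) (auto simp: finite_supp_P)
  also have "\<dots> = (\<Sum>\<beta>\<in>{\<beta>. separant \<beta> \<noteq> 0}. separant \<beta> * (mon m \<beta> * u m ^ \<beta> m))"
  proof (rule sum.reindex_bij_witness[where i = "\<lambda>\<beta>. \<beta>(m := Suc (\<beta> m))"
        and j = "\<lambda>\<alpha>. \<alpha>(m := \<alpha> m - 1)"])
    fix \<alpha> assume a: "\<alpha> \<in> {\<alpha>\<in>supp_P. \<alpha> m \<noteq> 0}"
    then show "(\<alpha>(m := \<alpha> m - 1))(m := Suc ((\<alpha>(m := \<alpha> m - 1)) m)) = \<alpha>"
      by (auto simp: fun_eq_iff)
    then show "\<alpha>(m := \<alpha> m - 1) \<in> {\<beta>. separant \<beta> \<noteq> 0}"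
      using a by (simp add: separant_nonzero_iff)
    have "mon m (\<alpha>(m := \<alpha> m - 1)) = mon m \<alpha>" by (rule mon_cong) auto
    then show "separant (\<alpha>(m := \<alpha> m - 1)) * (mon m (\<alpha>(m := \<alpha> m - 1)) * u m ^ (\<alpha>(m := \<alpha> m - 1)) m)
       = P \<alpha> * of_nat (\<alpha> m) * mon m \<alpha> * u m ^ (\<alpha> m - 1)"
      using a by (simp add: separant_def)
  next
    fix \<beta> assume "\<beta> \<in> {\<beta>. separant \<beta> \<noteq> 0}"
    then show "\<beta>(m := Suc (\<beta> m)) \<in> {\<alpha>\<in>supp_P. \<alpha> m \<noteq> 0}"
      by (simp add: separant_nonzero_iff)
  qed (auto simp: fun_eq_iff)
  also have "\<dots> = mpeval (Suc m) separant u" by (simp add: mpeval_split_last)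
  finally show ?thesis .
qed

text \<open>Differentiating \<open>P(u) = 0\<close> gives \<open>X + u\<^sub>m\<^sub>+\<^sub>1 \<cdot> S(u) = 0\<close> with \<open>X \<in> R\<close> and \<open>S\<close> the separant.\<close>

lemma u_Suc_m_in_E: "u (Suc m) \<in> E"
proof -
  define X where "X = (\<Sum>\<alpha>\<in>supp_P. D (P \<alpha>) * (mon m \<alpha> * u m ^ \<alpha> m) + P \<alpha> * (D (mon m \<alpha>) * u m ^ \<alpha> m))"
  define S where "S = (\<Sum>\<alpha>\<in>supp_P. P \<alpha> * of_nat (\<alpha> m) * mon m \<alpha> * u m ^ (\<alpha> m - 1))"
  have "0 = D (mpeval (Suc m) P u)" using P_vanishes derivation_zero[OF derivation] by simp
  also have "\<dots> = (\<Sum>\<alpha>\<in>supp_P. D (P \<alpha> * (mon m \<alpha> * u m ^ \<alpha> m)))"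
    by (simp add: mpeval_split_last derivation_sum[OF derivation])
  also have "\<dots> = (\<Sum>\<alpha>\<in>supp_P. (D (P \<alpha>) * (mon m \<alpha> * u m ^ \<alpha> m) + P \<alpha> * (D (mon m \<alpha>) * u m ^ \<alpha> m))
       + u (Suc m) * (P \<alpha> * of_nat (\<alpha> m) * mon m \<alpha> * u m ^ (\<alpha> m - 1)))"
    by (rule sum.cong)
       (auto simp: derivation_mult[OF derivation] derivation_power[OF derivation] D_u algebra_simps)
  also have "\<dots> = X + u (Suc m) * S"
    by (simp add: X_def S_def sum.distrib sum_distrib_left)
  finally have "X + u (Suc m) * S = 0" by simp
  moreover have "S \<noteq> 0" using separant_at_u_nonzero separant_eval S_def by simp
  ultimately have "u (Suc m) = (- X) / S" by (simp add: field_simps eq_neg_iff_add_eq_0)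
  moreover have "X \<in> R" unfolding X_def
    by (intro R_sum R_add R_mult R_K D_K P_in_K D_mon_in_R R_mon R_power R_u) auto
  moreover have "S \<in> R" unfolding S_def
    by (intro R_sum R_mult R_K P_in_K R_mon R_power R_u R_of_nat) auto
  ultimately show ?thesis using E_I[of "- X" S] R_uminus \<open>S \<noteq> 0\<close> by simp
qed

lemma D_R_in_E: "a \<in> R \<Longrightarrow> D a \<in> E"
proof (induction rule: R.induct)
  case (R_K k)
  then show ?case by (intro R_subset_E R.R_K D_K)
next
  case (R_u i)
  show ?case
  proof (cases "i = m")
    case False
    then show ?thesis using R_u R_subset_E[OF R.R_u[of "Suc i"]] by (simp add: D_u)
  qed (simp add: D_u u_Suc_m_in_E)
next
  case (R_add a b)
  then show ?case by (simp add: derivation_add[OF derivation] subfield_add[OF subfield_E])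
next
  case (R_mult a b)
  then show ?case
    by (simp add: derivation_mult[OF derivation] subfield_add[OF subfield_E]
        subfield_mult[OF subfield_E] R_subset_E)
next
  case (R_uminus a)
  then show ?case by (simp add: derivation_uminus[OF derivation] subfield_uminus[OF subfield_E])
qed

lemma diff_subfield_E: "diff_subfield D E"
proof -
  have "D x \<in> E" if "x \<in> E" for x
  proof -
    obtain p q where e: "x = p / q" "p \<in> R" "q \<in> R" "q \<noteq> 0"
      using \<open>x \<in> E\<close> unfolding E_def by blast
    then have "D x = (D p * q - p * D q) / (q * q)" by (simp add: derivation_divide[OF derivation])
    moreover have "p \<in> E" "q \<in> E" "D p \<in> E" "D q \<in> E" using e by (auto intro: R_subset_E D_R_in_E)
    ultimately show ?thesis
      by (auto intro!: subfield_divide[OF subfield_E] subfield_diff[OF subfield_E] subfield_mult[OF subfield_E])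
  qed
  then show ?thesis using subfield_E by (simp add: diff_subfield_def)
qed

lemma K_subset_E: "K \<subseteq> E"
  using R_subset_E R_K by blast

lemma u_zero_in_E: "u 0 \<in> E"
  using R_subset_E[OF R_u[of 0]] by simp

definition monomials :: "nat \<Rightarrow> 'a set" where
  "monomials N = {mon m f * u m ^ k | f k. f \<in> exp_box m N \<and> k \<le> N}"

definition lower_monomials :: "nat \<Rightarrow> 'a set" where
  "lower_monomials N = mon m ` exp_box m N"

definition reduced_monomials :: "nat \<Rightarrow> 'a set" where
  "reduced_monomials M = (\<lambda>(f, k). mon m f * u m ^ k) ` (exp_box m M \<times> {..<g})"

lemma reduced_monomials_I: "f \<in> exp_box m M \<Longrightarrow> k < g \<Longrightarrow> mon m f * u m ^ k \<in> reduced_monomials M"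
  unfolding reduced_monomials_def by (rule image_eqI[of _ _ "(f, k)"]) auto

lemma finite_reduced_monomials: "finite (reduced_monomials M)"
  unfolding reduced_monomials_def by (simp add: finite_exp_box)

lemma card_reduced_monomials_le: "card (reduced_monomials M) \<le> g * Suc M ^ m"
proof -
  have "card (reduced_monomials M) \<le> card (exp_box m M \<times> {..<g})"
    unfolding reduced_monomials_def by (rule card_image_le) (simp add: finite_exp_box)
  also have "\<dots> = g * Suc M ^ m" by (simp add: card_cartesian_product card_exp_box)
  finally show ?thesis .
qed

lemma monomials_I: "f \<in> exp_box m N \<Longrightarrow> k \<le> N \<Longrightarrow> mon m f * u m ^ k \<in> monomials N"
  unfolding monomials_def by blast

lemma one_in_monomials: "1 \<in> monomials N"
  using monomials_I[of "\<lambda>_. 0" N 0] zero_in_exp_box mon_zero by simp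

lemma monomials_mono: "N \<le> N' \<Longrightarrow> monomials N \<subseteq> monomials N'"
  unfolding monomials_def using exp_box_mono le_trans by blast

lemma span_monomials_mono: "N \<le> N' \<Longrightarrow> x \<in> span_over K (monomials N) \<Longrightarrow> x \<in> span_over K (monomials N')"
  using monomials_mono span_over_mono by blast

lemma monomials_mult: "a \<in> monomials N1 \<Longrightarrow> b \<in> monomials N2 \<Longrightarrow> a * b \<in> monomials (N1 + N2)"
proof -
  assume "a \<in> monomials N1" "b \<in> monomials N2"
  then obtain f1 k1 f2 k2 where e: "a = mon m f1 * u m ^ k1" "f1 \<in> exp_box m N1" "k1 \<le> N1"
    "b = mon m f2 * u m ^ k2" "f2 \<in> exp_box m N2" "k2 \<le> N2" unfolding monomials_def by blast
  then have "a * b = mon m (\<lambda>i. f1 i + f2 i) * u m ^ (k1 + k2)"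
    by (simp add: mon_add power_add algebra_simps)
  then show ?thesis using e by (auto intro!: monomials_I exp_box_add)
qed

lemma span_monomials_mult:
  "x \<in> span_over K (monomials N1) \<Longrightarrow> z \<in> span_over K (monomials N2) \<Longrightarrow> x * z \<in> span_over K (monomials (N1 + N2))"
  by (rule span_over_mult[of "monomials N1" "monomials N2"]) (auto intro: monomials_mult)

lemma span_monomials_power: "x \<in> span_over K (monomials N) \<Longrightarrow> x ^ j \<in> span_over K (monomials (j * N))"
proof (induction j)
  case 0
  then show ?case by (simp add: span_over_base one_in_monomials)
next
  case (Suc j)
  then have "x * x ^ j \<in> span_over K (monomials (N + j * N))" by (intro span_monomials_mult) auto
  then show ?case by simp
qed

lemma span_monomials_prod:
  "finite I \<Longrightarrow> (\<And>i. i \<in> I \<Longrightarrow> x i \<in> span_over K (monomials N)) \<Longrightarrow>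
    prod x I \<in> span_over K (monomials (card I * N))"
proof (induction I rule: finite_induct)
  case empty
  then show ?case by (simp add: span_over_base one_in_monomials)
next
  case (insert a I)
  then have "x a * prod x I \<in> span_over K (monomials (N + card I * N))" by (intro span_monomials_mult) auto
  then show ?case using insert by simp
qed

lemma R_in_span_monomials: "a \<in> R \<Longrightarrow> \<exists>N. a \<in> span_over K (monomials N)"
proof (induction rule: R.induct)
  case (R_K k)
  have "k * 1 \<in> span_over K (monomials 0)" by (intro span_over_smult R_K span_over_base one_in_monomials)
  then show ?case by auto
next
  case (R_u i)
  show ?case
  proof (cases "i = m")
    case True
    have "u m \<in> monomials 1" using monomials_I[of "\<lambda>_. 0" 1 1] zero_in_exp_box by (simp add: mon_zero)
    then show ?thesis using True by (auto intro: span_over_base)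
  next
    case False
    then have "i < m" using R_u by simp
    then have "(\<lambda>j. if j = i then 1 else 0) \<in> exp_box m 1" by (auto simp: exp_box_def)
    then have "u i \<in> monomials 1" using monomials_I[of _ 1 0] mon_unit[OF \<open>i < m\<close>] by fastforce
    then show ?thesis by (auto intro: span_over_base)
  qed
next
  case (R_add a b)
  then obtain N1 N2 where "a \<in> span_over K (monomials N1)" "b \<in> span_over K (monomials N2)" by blast
  then have "a \<in> span_over K (monomials (N1 + N2))" "b \<in> span_over K (monomials (N1 + N2))"
    using span_monomials_mono[of N1 "N1 + N2" a] span_monomials_mono[of N2 "N1 + N2" b] by auto
  then show ?case by (auto intro: span_over_add)
next
  case (R_mult a b)
  then show ?case by (auto intro: span_monomials_mult)
next
  case (R_uminus a)
  then show ?case by (auto intro: span_over_uminus subfield_K)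
qed

lemma lower_monomials_mult: "a \<in> lower_monomials N1 \<Longrightarrow> b \<in> lower_monomials N2 \<Longrightarrow> a * b \<in> lower_monomials (N1 + N2)"
  unfolding lower_monomials_def by (auto simp: mon_add[symmetric] intro: exp_box_add)

lemma span_lower_monomials_power: "x \<in> span_over K (lower_monomials N) \<Longrightarrow> x ^ j \<in> span_over K (lower_monomials (j * N))"
proof (induction j)
  case 0
  have "1 \<in> lower_monomials 0" unfolding lower_monomials_def using zero_in_exp_box mon_zero by (metis image_eqI)
  then show ?case by (simp add: span_over_base)
next
  case (Suc j)
  then have "x * x ^ j \<in> span_over K (lower_monomials (N + j * N))"
    by (intro span_over_mult[of "lower_monomials N" "lower_monomials (j * N)"]) (auto intro: lower_monomials_mult)
  then show ?case by simp
qed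

text \<open>Writing \<open>P = \<Sum>\<^sub>k A\<^sub>k Y\<^sub>m\<^sup>k\<close> with \<open>A\<^sub>k\<close> polynomials in the lower variables, \<open>top_coeff k\<close> is
  \<open>A\<^sub>k(u)\<close>, and \<open>lower_deg\<close> bounds the exponents of the lower variables occurring in \<open>P\<close>.\<close>

definition lower_deg :: nat where
  "lower_deg = (\<Sum>\<alpha>\<in>supp_P. \<Sum>i<m. \<alpha> i)"

definition top_coeff :: "nat \<Rightarrow> 'a" where
  "top_coeff k = (\<Sum>\<alpha>\<in>{\<alpha>\<in>supp_P. \<alpha> m = k}. P \<alpha> * mon m \<alpha>)"

lemma top_coeff_in_span: "top_coeff k \<in> span_over K (lower_monomials lower_deg)"
  unfolding top_coeff_def
proof (rule span_over_sum)
  fix \<alpha> assume \<alpha>: "\<alpha> \<in> {\<alpha>\<in>supp_P. \<alpha> m = k}"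
  define t where "t i = (if i < m then \<alpha> i else 0)" for i
  have "\<alpha> i \<le> lower_deg" if "i < m" for i
  proof -
    have "\<alpha> i \<le> (\<Sum>i<m. \<alpha> i)" using that by (intro member_le_sum) auto
    also have "\<dots> \<le> lower_deg" unfolding lower_deg_def using \<alpha> finite_supp_P by (intro member_le_sum) auto
    finally show ?thesis .
  qed
  then have "t \<in> exp_box m lower_deg" by (auto simp: exp_box_def t_def)
  moreover have "mon m \<alpha> = mon m t" by (rule mon_cong) (simp add: t_def)
  ultimately have "mon m \<alpha> \<in> lower_monomials lower_deg" unfolding lower_monomials_def by blast
  then show "P \<alpha> * mon m \<alpha> \<in> span_over K (lower_monomials lower_deg)"
    by (intro span_over_smult P_in_K span_over_base)
qed

lemma top_coeff_mon_in_span: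
  "f \<in> exp_box m F \<Longrightarrow> top_coeff i * mon m f \<in> span_over K (lower_monomials (lower_deg + F))"
  by (rule span_over_mult[OF _ top_coeff_in_span span_over_base[of _ "{mon m f}"]])
     (auto simp: lower_monomials_def intro: lower_monomials_mult[unfolded lower_monomials_def])

lemma P_by_top_coeffs: "top_coeff g * u m ^ g = - (\<Sum>k<g. top_coeff k * u m ^ k)"
proof -
  have "0 = (\<Sum>\<alpha>\<in>supp_P. P \<alpha> * (mon m \<alpha> * u m ^ \<alpha> m))"
    using P_vanishes by (simp add: mpeval_split_last)
  also have "\<dots> = (\<Sum>k\<in>{..g}. \<Sum>\<alpha>\<in>{\<alpha>. \<alpha> \<in> supp_P \<and> \<alpha> m = k}. P \<alpha> * (mon m \<alpha> * u m ^ \<alpha> m))"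
    by (rule sum.group[symmetric]) (auto simp: finite_supp_P intro: P_degree)
  also have "\<dots> = (\<Sum>k\<in>{..g}. top_coeff k * u m ^ k)"
    unfolding top_coeff_def sum_distrib_right by (rule sum.cong) (auto simp: algebra_simps)
  also have "\<dots> = (\<Sum>k<g. top_coeff k * u m ^ k) + top_coeff g * u m ^ g"
    by (simp add: lessThan_Suc_atMost[symmetric])
  finally show ?thesis by (simp add: eq_neg_iff_add_eq_0 add.commute)
qed

text \<open>The leading coefficient \<open>A\<^sub>g(u)\<close> is the value at \<open>u\<close> of the initial \<open>A\<^sub>g\<close>, a nonzero polynomial
  not involving \<open>Y\<^sub>m\<close>, so minimality of \<open>P\<close> forbids it to vanish.\<close>

definition initial :: "(nat \<Rightarrow> nat) \<Rightarrow> 'a" where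
  "initial \<beta> = (if \<beta> m = 0 then P (\<beta>(m := g)) else 0)"

lemma top_coeff_g_nonzero: "top_coeff g \<noteq> 0"
proof -
  have "is_mpoly K (Suc m) initial"
  proof (rule is_mpoly_by_embedding[OF finite_supp_P, where h = "\<lambda>\<beta>. \<beta>(m := g)"
        and h' = "\<lambda>\<alpha>. \<alpha>(m := 0)"])
    fix \<beta> assume "initial \<beta> \<noteq> 0"
    then show "P (\<beta>(m := g)) \<noteq> 0 \<and> (\<beta>(m := g))(m := 0) = \<beta> \<and> initial \<beta> \<in> K \<and> (\<forall>i\<ge>Suc m. \<beta> i = 0)"
      using P_vars[of "\<beta>(m := g)"] P_in_K by (auto simp: initial_def fun_eq_iff split: if_splits)
  qed
  moreover obtain \<alpha> where \<alpha>: "P \<alpha> \<noteq> 0" "\<alpha> m = g" using P_leading by blast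
  then have "initial (\<alpha>(m := 0)) \<noteq> 0" by (simp add: initial_def fun_upd_idem)
  then have "mpoly_nonzero initial" by (auto simp: mpoly_nonzero_def)
  moreover have "\<forall>\<beta>. initial \<beta> \<noteq> 0 \<longrightarrow> \<beta> m < g" using degree_pos by (simp add: initial_def)
  moreover have "mpeval (Suc m) initial u = top_coeff g"
    unfolding mpeval_split_last top_coeff_def
  proof (rule sum.reindex_bij_witness[where i = "\<lambda>\<alpha>. \<alpha>(m := 0)" and j = "\<lambda>\<beta>. \<beta>(m := g)"])
    fix \<beta> assume b: "\<beta> \<in> {\<beta>. initial \<beta> \<noteq> 0}"
    then have "\<beta> m = 0" by (simp add: initial_def split: if_splits)
    then show "(\<beta>(m := g))(m := 0) = \<beta>" by (auto simp: fun_eq_iff)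
    show "\<beta>(m := g) \<in> {\<alpha>\<in>supp_P. \<alpha> m = g}" using b by (simp add: initial_def split: if_splits)
    have "mon m (\<beta>(m := g)) = mon m \<beta>" by (rule mon_cong) auto
    then show "P (\<beta>(m := g)) * mon m (\<beta>(m := g)) = initial \<beta> * (mon m \<beta> * u m ^ \<beta> m)"
      using \<open>\<beta> m = 0\<close> by (simp add: initial_def)
  next
    fix \<alpha> assume "\<alpha> \<in> {\<alpha>\<in>supp_P. \<alpha> m = g}"
    then show "(\<alpha>(m := 0))(m := g) = \<alpha>" "\<alpha>(m := 0) \<in> {\<beta>. initial \<beta> \<noteq> 0}"
      by (auto simp: fun_eq_iff initial_def fun_upd_idem)
  qed
  ultimately show ?thesis using minimal by metis
qed

lemma reduce_low_monomial:
  assumes "k < g" and "f \<in> exp_box m F"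
  shows "top_coeff g ^ j * (mon m f * u m ^ k) \<in> span_over K (reduced_monomials (F + j * lower_deg))"
proof (rule span_over_mult[OF _ span_lower_monomials_power[OF top_coeff_in_span]
      span_over_base[of _ "{mon m f * u m ^ k}"]])
  fix a b assume "a \<in> lower_monomials (j * lower_deg)" "b \<in> {mon m f * u m ^ k}"
  then obtain f' where f': "a = mon m f'" "f' \<in> exp_box m (j * lower_deg)" "b = mon m f * u m ^ k"
    unfolding lower_monomials_def by blast
  then have "a * b = mon m (\<lambda>i. f' i + f i) * u m ^ k" by (simp add: mon_add algebra_simps)
  moreover have "(\<lambda>i. f' i + f i) \<in> exp_box m (j * lower_deg + F)"
    using f' assms(2) by (intro exp_box_add)
  ultimately show "a * b \<in> reduced_monomials (F + j * lower_deg)"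
    using reduced_monomials_I assms(1) by (simp add: add.commute)
qed simp

lemma top_coeff_power_reduce:
  assumes "g \<le> k"
  shows "top_coeff g ^ Suc j * (mon m f * u m ^ k)
    = - (\<Sum>i<g. (top_coeff g ^ j * u m ^ (k - g + i)) * (top_coeff i * mon m f))"
proof -
  have "top_coeff g ^ Suc j * (mon m f * u m ^ k)
      = top_coeff g ^ j * mon m f * u m ^ (k - g) * (top_coeff g * u m ^ g)"
    using assms by (simp add: algebra_simps power_add[symmetric])
  also have "\<dots> = - (\<Sum>i<g. top_coeff g ^ j * mon m f * u m ^ (k - g) * (top_coeff i * u m ^ i))"
    unfolding P_by_top_coeffs by (simp add: sum_distrib_left)
  also have "\<dots> = - (\<Sum>i<g. (top_coeff g ^ j * u m ^ (k - g + i)) * (top_coeff i * mon m f))"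
    by (simp add: power_add algebra_simps)
  finally show ?thesis .
qed

text \<open>Each use of \<open>P\<close> to lower the \<open>u\<^sub>m\<close>-degree costs one factor \<open>A\<^sub>g(u)\<close> and raises the lower
  exponents by at most \<open>lower_deg\<close>.\<close>

lemma reduce_monomial:
  "k < g + j \<Longrightarrow> f \<in> exp_box m F \<Longrightarrow>
    top_coeff g ^ j * (mon m f * u m ^ k) \<in> span_over K (reduced_monomials (F + j * lower_deg))"
proof (induction k arbitrary: j f F rule: less_induct)
  case (less k)
  show ?case
  proof (cases "k < g")
    case True
    then show ?thesis using reduce_low_monomial less.prems(2) by blast
  next
    case False
    then obtain j' where j: "j = Suc j'" using less.prems(1) by (cases j) auto
    have "(top_coeff g ^ j' * u m ^ (k - g + i)) * (top_coeff i * mon m f)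
        \<in> span_over K (reduced_monomials (F + j * lower_deg))" if "i < g" for i
    proof (rule span_over_mult_left[OF _ top_coeff_mon_in_span[OF less.prems(2)]])
      fix h assume "h \<in> lower_monomials (lower_deg + F)"
      then obtain f'' where h: "h = mon m f''" "f'' \<in> exp_box m (lower_deg + F)"
        unfolding lower_monomials_def by blast
      have "k - g + i < k" "k - g + i < g + j'" using that False less.prems(1) j by auto
      from less.IH[OF this h(2)]
      have "top_coeff g ^ j' * (mon m f'' * u m ^ (k - g + i))
          \<in> span_over K (reduced_monomials (lower_deg + F + j' * lower_deg))" .
      moreover have "lower_deg + F + j' * lower_deg = F + j * lower_deg" by (simp add: j)
      ultimately show "top_coeff g ^ j' * u m ^ (k - g + i) * h \<in> span_over K (reduced_monomials (F + j * lower_deg))"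
        using h by (simp add: algebra_simps)
    qed
    then show ?thesis
      unfolding j top_coeff_power_reduce[OF leI[OF False]]
      by (intro span_over_uminus subfield_K span_over_sum) (simp add: j)
  qed
qed

lemma span_monomials_reduce:
  "x \<in> span_over K (monomials N) \<Longrightarrow>
    top_coeff g ^ Suc N * x \<in> span_over K (reduced_monomials (N + Suc N * lower_deg))"
proof (rule span_over_mult_left)
  fix h assume "h \<in> monomials N"
  then obtain f k where "h = mon m f * u m ^ k" "f \<in> exp_box m N" "k \<le> N"
    unfolding monomials_def by blast
  then show "top_coeff g ^ Suc N * h \<in> span_over K (reduced_monomials (N + Suc N * lower_deg))"
    using reduce_monomial[of k "Suc N" f N] by simp
qed

lemma E_common_denominator:
  fixes n :: nat
  assumes "\<And>j. j < n \<Longrightarrow> x j \<in> E"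
  obtains p q N where "\<And>j. j < n \<Longrightarrow> p j \<in> span_over K (monomials N) \<and> q j \<in> span_over K (monomials N)
    \<and> q j \<noteq> 0 \<and> x j = p j / q j"
proof -
  have "\<forall>j<n. \<exists>a b N. a \<in> span_over K (monomials N) \<and> b \<in> span_over K (monomials N) \<and> b \<noteq> 0 \<and> x j = a / b"
  proof (intro allI impI)
    fix j assume "j < n"
    then obtain a b where ab: "a \<in> R" "b \<in> R" "b \<noteq> 0" "x j = a / b"
      using assms unfolding E_def by blast
    then obtain N1 N2 where "a \<in> span_over K (monomials N1)" "b \<in> span_over K (monomials N2)"
      using R_in_span_monomials by blast
    then have "a \<in> span_over K (monomials (N1 + N2))" "b \<in> span_over K (monomials (N1 + N2))"
      using span_monomials_mono[of N1 "N1 + N2" a] span_monomials_mono[of N2 "N1 + N2" b] by auto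
    then show "\<exists>a b N. a \<in> span_over K (monomials N) \<and> b \<in> span_over K (monomials N) \<and> b \<noteq> 0 \<and> x j = a / b"
      using ab by blast
  qed
  then obtain p q Nf where pq: "\<And>j. j < n \<Longrightarrow> p j \<in> span_over K (monomials (Nf j))
      \<and> q j \<in> span_over K (monomials (Nf j)) \<and> q j \<noteq> 0 \<and> x j = p j / q j"
    by metis
  show thesis
  proof (rule that)
    fix j assume "j < n"
    then have "Nf j \<le> (\<Sum>j<n. Nf j)" by (intro member_le_sum) auto
    then show "p j \<in> span_over K (monomials (\<Sum>j<n. Nf j)) \<and> q j \<in> span_over K (monomials (\<Sum>j<n. Nf j))
        \<and> q j \<noteq> 0 \<and> x j = p j / q j"
      using pq[OF \<open>j < n\<close>] span_monomials_mono by blast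
  qed
qed

lemma scaled_box_monomial_in_span:
  assumes pq: "\<And>j. j < Suc m \<Longrightarrow> p j \<in> span_over K (monomials N0) \<and> q j \<in> span_over K (monomials N0)"
    and \<alpha>: "\<alpha> \<in> exp_box (Suc m) d" and N: "N = Suc m * (d * N0)"
  shows "top_coeff g ^ Suc N * (\<Prod>j<Suc m. q j ^ (d - \<alpha> j) * p j ^ \<alpha> j)
    \<in> span_over K (reduced_monomials (N + Suc N * lower_deg))"
proof -
  have "(\<Prod>j<Suc m. q j ^ (d - \<alpha> j) * p j ^ \<alpha> j) \<in> span_over K (monomials (card {..<Suc m} * (d * N0)))"
  proof (rule span_monomials_prod)
    fix j assume "j \<in> {..<Suc m}"
    then have j: "j < Suc m" by simp
    then have "\<alpha> j \<le> d" using \<alpha> by (auto simp: exp_box_def)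
    have "q j ^ (d - \<alpha> j) * p j ^ \<alpha> j \<in> span_over K (monomials ((d - \<alpha> j) * N0 + \<alpha> j * N0))"
      using pq[OF j] by (intro span_monomials_mult span_monomials_power) auto
    moreover have "(d - \<alpha> j) * N0 + \<alpha> j * N0 = d * N0"
      using \<open>\<alpha> j \<le> d\<close> by (simp add: add_mult_distrib[symmetric])
    ultimately show "q j ^ (d - \<alpha> j) * p j ^ \<alpha> j \<in> span_over K (monomials (d * N0))" by simp
  qed simp
  then show ?thesis using span_monomials_reduce N by simp
qed

lemma not_alg_indep_in_E:
  assumes xs: "set xs \<subseteq> E" and len: "m < length xs"
  shows "\<not> alg_indep K xs"
proof -
  have xs_E: "xs ! j \<in> E" if "j < Suc m" for j
    using xs len that nth_mem[of j xs] by auto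
  obtain p q N0 where pq: "\<And>j. j < Suc m \<Longrightarrow> p j \<in> span_over K (monomials N0)
      \<and> q j \<in> span_over K (monomials N0) \<and> q j \<noteq> 0 \<and> xs ! j = p j / q j"
    using E_common_denominator[of "Suc m" "(!) xs"] xs_E by metis
  define C where "C = (Suc m * N0 + 1) * (lower_deg + 1)"
  define d where "d = g * C ^ m"
  define N where "N = Suc m * (d * N0)"
  define M where "M = N + Suc N * lower_deg"
  define w where "w \<alpha> = top_coeff g ^ Suc N * (\<Prod>j<Suc m. q j ^ (d - \<alpha> j) * p j ^ \<alpha> j)" for \<alpha>
  have w_in: "w \<alpha> \<in> span_over K (reduced_monomials M)" if "\<alpha> \<in> exp_box (Suc m) d" for \<alpha>
    using scaled_box_monomial_in_span[OF _ that N_def] pq by (simp add: w_def M_def)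
  have "card (reduced_monomials M) \<le> g * Suc M ^ m" by (rule card_reduced_monomials_le)
  also have "\<dots> < Suc d ^ Suc m" by (rule box_count_exceeds[OF C_def d_def N_def M_def])
  finally have card_lt: "card (reduced_monomials M) < card (exp_box (Suc m) d)"
    by (simp add: card_exp_box)
  have "\<exists>c. (\<forall>\<alpha>\<in>exp_box (Suc m) d. c \<alpha> \<in> K) \<and> (\<exists>\<alpha>\<in>exp_box (Suc m) d. c \<alpha> \<noteq> 0)
      \<and> (\<Sum>\<alpha>\<in>exp_box (Suc m) d. c \<alpha> * w \<alpha>) = 0"
    by (rule span_over_linear_dependent[OF subfield_K finite_reduced_monomials finite_exp_box card_lt])
       (rule w_in)
  then obtain c where c: "\<forall>\<alpha>\<in>exp_box (Suc m) d. c \<alpha> \<in> K" "\<exists>\<alpha>\<in>exp_box (Suc m) d. c \<alpha> \<noteq> 0"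
      "(\<Sum>\<alpha>\<in>exp_box (Suc m) d. c \<alpha> * w \<alpha>) = 0"
    by blast
  define Z where "Z = top_coeff g ^ Suc N * (\<Prod>j<Suc m. q j ^ d)"
  have "Z \<noteq> 0" using top_coeff_g_nonzero pq by (simp add: Z_def)
  have w_eq: "w \<alpha> = Z * (\<Prod>j<Suc m. (xs ! j) ^ \<alpha> j)" if "\<alpha> \<in> exp_box (Suc m) d" for \<alpha>
    using prod_clear_denominators[of "Suc m" q "(!) xs" p, OF _ that] pq by (simp add: w_def Z_def)
  have "Z * (\<Sum>\<alpha>\<in>exp_box (Suc m) d. c \<alpha> * (\<Prod>j<Suc m. (xs ! j) ^ \<alpha> j))
      = (\<Sum>\<alpha>\<in>exp_box (Suc m) d. c \<alpha> * w \<alpha>)"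
    unfolding sum_distrib_left by (rule sum.cong) (simp_all add: w_eq)
  then have "(\<Sum>\<alpha>\<in>exp_box (Suc m) d. c \<alpha> * (\<Prod>j<Suc m. (xs ! j) ^ \<alpha> j)) = 0"
    using c(3) \<open>Z \<noteq> 0\<close> by simp
  moreover have "Suc m \<le> length xs" using len by simp
  ultimately show ?thesis using not_alg_indep_if_box_relation c(1,2) by blast
qed

lemma trdeg_E_le: "trdeg K E \<le> enat m"
  using not_alg_indep_in_E by (rule trdeg_le_if_dependent)

end

section \<open>Non-closedness yields a small differential extension\<close>

text \<open>Order \<open>0\<close> is impossible here: a nonzero constant does not vanish.\<close>

lemma annihilator_lower_order:
  assumes "is_mpoly K (Suc n) c" and "mpoly_nonzero c" and "mpeval (Suc n) c u = 0"
    and "\<forall>\<alpha>. c \<alpha> \<noteq> 0 \<longrightarrow> \<alpha> n = 0"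
  obtains k where "k < n" and "is_mpoly K (Suc k) c" and "mpeval (Suc k) c u = 0"
proof -
  have "is_mpoly K n c" "mpeval n c u = 0"
    using mpoly_drop_last_var[OF assms(1,4)] assms(3) by auto
  show thesis
  proof (cases n)
    case 0
    then show ?thesis
      using mpeval_constant_nonzero[of K c u] \<open>is_mpoly K n c\<close> \<open>mpeval n c u = 0\<close> assms(2) by simp
  next
    case (Suc k)
    then show ?thesis using that[of k] \<open>is_mpoly K n c\<close> \<open>mpeval n c u = 0\<close> by simp
  qed
qed

lemma exists_minimal_annihilator:
  assumes "is_mpoly K (Suc r) c0" and "mpoly_nonzero c0" and "mpeval (Suc r) c0 u = 0"
  obtains m P g where "m \<le> r" and "is_mpoly K (Suc m) P" and "mpeval (Suc m) P u = 0"
    and "\<And>\<alpha>. P \<alpha> \<noteq> 0 \<Longrightarrow> \<alpha> m \<le> g" and "\<exists>\<alpha>. P \<alpha> \<noteq> 0 \<and> \<alpha> m = g" and "1 \<le> g"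
    and "\<And>c. is_mpoly K (Suc m) c \<Longrightarrow> mpoly_nonzero c \<Longrightarrow> (\<forall>\<alpha>. c \<alpha> \<noteq> 0 \<longrightarrow> \<alpha> m < g)
      \<Longrightarrow> mpeval (Suc m) c u \<noteq> 0"
proof -
  define V where "V n = (\<exists>c. is_mpoly K (Suc n) c \<and> mpoly_nonzero c \<and> mpeval (Suc n) c u = 0)" for n
  define m where "m = (LEAST n. V n)"
  have "V r" using assms by (auto simp: V_def)
  then have "V m" and "m \<le> r" unfolding m_def by (auto intro: LeastI Least_le)
  define W where "W g = (\<exists>c. is_mpoly K (Suc m) c \<and> mpoly_nonzero c \<and> mpeval (Suc m) c u = 0
      \<and> (\<forall>\<alpha>. c \<alpha> \<noteq> 0 \<longrightarrow> \<alpha> m \<le> g))" for g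
  have "\<exists>g. W g"
  proof -
    obtain c where c: "is_mpoly K (Suc m) c" "mpoly_nonzero c" "mpeval (Suc m) c u = 0"
      using \<open>V m\<close> V_def by blast
    then have "finite {\<alpha>. c \<alpha> \<noteq> 0}" by (simp add: is_mpoly_def)
    then have "\<forall>\<alpha>. c \<alpha> \<noteq> 0 \<longrightarrow> \<alpha> m \<le> (\<Sum>\<beta>\<in>{\<alpha>. c \<alpha> \<noteq> 0}. \<beta> m)"
      by (auto intro: member_le_sum)
    then show ?thesis using c by (auto simp: W_def)
  qed
  define g where "g = (LEAST g. W g)"
  have "W g" unfolding g_def using \<open>\<exists>g. W g\<close> by (auto intro: LeastI)
  then obtain P where P: "is_mpoly K (Suc m) P" "mpoly_nonzero P" "mpeval (Suc m) P u = 0"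
    "\<And>\<alpha>. P \<alpha> \<noteq> 0 \<Longrightarrow> \<alpha> m \<le> g" unfolding W_def by blast
  have minimal: "mpeval (Suc m) c u \<noteq> 0"
    if c: "is_mpoly K (Suc m) c" "mpoly_nonzero c" "\<forall>\<alpha>. c \<alpha> \<noteq> 0 \<longrightarrow> \<alpha> m < g" for c
  proof
    assume "mpeval (Suc m) c u = 0"
    then have "W (g - 1)" unfolding W_def using c by (intro exI[of _ c]) auto
    then have "g \<le> g - 1" unfolding g_def by (rule Least_le)
    moreover obtain \<alpha> where "c \<alpha> \<noteq> 0" using c(2) by (auto simp: mpoly_nonzero_def)
    then have "\<alpha> m < g" using c(3) by blast
    ultimately show False by linarith
  qed
  have leading: "\<exists>\<alpha>. P \<alpha> \<noteq> 0 \<and> \<alpha> m = g"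
  proof (rule ccontr)
    assume "\<not> ?thesis"
    then have "\<forall>\<alpha>. P \<alpha> \<noteq> 0 \<longrightarrow> \<alpha> m < g" using P(4) le_neq_implies_less by blast
    then show False using minimal[OF P(1,2)] P(3) by blast
  qed
  have "1 \<le> g"
  proof (rule ccontr)
    assume "\<not> 1 \<le> g"
    then have "\<forall>\<alpha>. P \<alpha> \<noteq> 0 \<longrightarrow> \<alpha> m = 0" using P(4) by fastforce
    then obtain k where "k < m" "is_mpoly K (Suc k) P" "mpeval (Suc k) P u = 0"
      by (rule annihilator_lower_order[OF P(1,2,3)])
    then have "V k" using P(2) by (auto simp: V_def)
    then have "m \<le> k" unfolding m_def by (rule Least_le)
    then show False using \<open>k < m\<close> by simp
  qed
  from \<open>m \<le> r\<close> P(1,3,4) leading \<open>1 \<le> g\<close> minimal show thesis by (rule that)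
qed

lemma not_r_diff_closed_small_extension:
  assumes "derivation D" and "diff_subfield D K" and "\<not> r_diff_closed D r K"
  shows "\<exists>E. diff_subfield D E \<and> K \<subset> E \<and> trdeg K E \<le> enat r"
proof -
  obtain c0 y where c0: "is_mpoly K (Suc r) c0" "mpoly_nonzero c0" "mpeval (Suc r) c0 (\<lambda>i. (D^^i) y) = 0"
    and "y \<notin> K"
    using assms(3) unfolding r_diff_closed_def by blast
  obtain m P g where "m \<le> r" and P: "is_mpoly K (Suc m) P" "mpeval (Suc m) P (\<lambda>i. (D^^i) y) = 0"
    "\<And>\<alpha>. P \<alpha> \<noteq> 0 \<Longrightarrow> \<alpha> m \<le> g" "\<exists>\<alpha>. P \<alpha> \<noteq> 0 \<and> \<alpha> m = g" "1 \<le> g"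
    "\<And>c. is_mpoly K (Suc m) c \<Longrightarrow> mpoly_nonzero c \<Longrightarrow> (\<forall>\<alpha>. c \<alpha> \<noteq> 0 \<longrightarrow> \<alpha> m < g)
      \<Longrightarrow> mpeval (Suc m) c (\<lambda>i. (D^^i) y) \<noteq> 0"
    using c0 by (rule exists_minimal_annihilator) (rule that)
  interpret minimal_annihilator D K "\<lambda>i. (D^^i) y" m g P
    by unfold_locales (use assms(1,2) P in simp_all)
  have "trdeg K E \<le> enat r" using trdeg_E_le \<open>m \<le> r\<close> order_trans by fastforce
  then show ?thesis using diff_subfield_E K_subset_E u_zero_in_E \<open>y \<notin> K\<close> by auto
qed

theorem mainTheorem16:
  fixes D :: "'a::field_char_0 \<Rightarrow> 'a" and K :: "'a set" and r :: nat
  assumes "derivation D"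
    and "diff_subfield D K"
  shows "r_diff_closed D r K \<longleftrightarrow>
    \<not> (\<exists>E. diff_subfield D E \<and> K \<subset> E \<and> trdeg K E \<le> enat r)"
proof
  assume "r_diff_closed D r K"
  then show "\<not> (\<exists>E. diff_subfield D E \<and> K \<subset> E \<and> trdeg K E \<le> enat r)"
    using r_diff_closed_no_small_extension[of D r K] assms(2) by (auto simp: diff_subfield_def)
qed (use not_r_diff_closed_small_extension[OF assms] in blast)

end
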